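(* Let $X,Y\in\mathbb M(n)$ with $Y$ positive semidefinite, with eigenvalues $\lambda_1(Y)\ge\dots\ge\lambda_n(Y)\ge0$. For $1\le r\le n$, let $$\mathcal W(X,Y)=\Big\{\sum_{i=1}^r\langle u_i,Xu_i\rangle:\ u_1,\dots,u_r\in\mathbb C^n\text{ orthonormal},\ Yu_i=\lambda_i(Y)u_i\ \forall\,1\le i\le r\Big\}.$$ Then $\mathcal W(X,Y)$ is a convex subset of $\mathbb C$.
   Context: Inner products on $\mathbb C^n$ are conjugate linear in the first argument and linear in the second. *)

theory Defs
  imports "HOL-Analysis.Convex" "Jordan_Normal_Form.Char_Poly" "Jordan_Normal_Form.Conjugate"
begin

definition cinner :: "complex vec \<Rightarrow> complex vec \<Rightarrow> complex" where
  "cinner u v = conjugate u \<bullet> v"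

definition hermitian_mat :: "nat \<Rightarrow> complex mat \<Rightarrow> bool" where
  "hermitian_mat n Y \<longleftrightarrow> Y \<in> carrier_mat n n \<and>
     (\<forall>i<n. \<forall>j<n. Y $$ (i, j) = cnj (Y $$ (j, i)))"

definition psd_mat :: "nat \<Rightarrow> complex mat \<Rightarrow> bool" where
  "psd_mat n Y \<longleftrightarrow> hermitian_mat n Y \<and>
     (\<forall>v \<in> carrier_vec n. Im (cinner v (Y *\<^sub>v v)) = 0 \<and> Re (cinner v (Y *\<^sub>v v)) \<ge> 0)"

text \<open>Eigenvalues (with algebraic multiplicity, i.e. roots of the characteristic
  polynomial) of a Hermitian matrix, listed in non-increasing order:
  entry k (0-based) is lambda_(k+1)(Y).\<close>
definition eigvals_desc :: "complex mat \<Rightarrow> real list" where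
  "eigvals_desc Y = rev (sorted_list_of_multiset (image_mset Re (proots (char_poly Y))))"

definition W_set :: "nat \<Rightarrow> nat \<Rightarrow> complex mat \<Rightarrow> complex mat \<Rightarrow> complex set" where
  "W_set n r X Y = { (\<Sum>i<r. cinner (u i) (X *\<^sub>v u i)) | u.
      (\<forall>i<r. u i \<in> carrier_vec n) \<and>
      (\<forall>i<r. \<forall>j<r. cinner (u i) (u j) = (if i = j then 1 else 0)) \<and>
      (\<forall>i<r. Y *\<^sub>v u i = complex_of_real (eigvals_desc Y ! i) \<cdot>\<^sub>v u i) }"

end

theory Submission
  imports Defs "HOL-Computational_Algebra.Fundamental_Theorem_Algebra"
begin

text \<open>Group the indices \<open>1, \<dots>, r\<close> into blocks of equal eigenvalues of \<open>Y\<close>. A point of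
  \<open>W(X, Y)\<close> is the trace form \<open>\<Sum>\<^sub>i \<langle>u\<^sub>i, X u\<^sub>i\<rangle>\<close> of an orthonormal frame whose \<open>i\<close>-th vector is
  an eigenvector for \<open>\<lambda>\<^sub>i\<close>. Given two such frames \<open>u\<close>, \<open>v\<close> and \<open>t \<in> [0, 1]\<close>, a frame
  with trace form \<open>(1 - t) tr(u) + t tr(v)\<close> is built by induction on \<open>r\<close>. In the last block
  choose unit vectors \<open>x\<close>, \<open>y\<close> in the spans of the blocks of \<open>u\<close> and \<open>v\<close> such that the
  orthogonal complement of \<open>x\<close> in the first span is orthogonal to \<open>y\<close> and vice versa. A
  Householder reflection inside each span, which does not change the trace form, moves \<open>x\<close>
  and \<open>y\<close> to the last position; the other vectors of both frames are then orthogonal to both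
  \<open>x\<close> and \<open>y\<close>, so the first \<open>r - 1\<close> positions are handled by induction (keeping orthogonality
  to \<open>x\<close>, \<open>y\<close>), and the last position is filled by a unit vector of \<open>span {x, y}\<close> supplied by
  the two-dimensional Toeplitz--Hausdorff theorem.\<close>

text \<open>Vectors of \<open>\<complex>\<^sup>n\<close> are modelled by functions \<open>nat \<Rightarrow> complex\<close> of which only the first \<open>n\<close>
  values matter, matrices by functions \<open>nat \<Rightarrow> nat \<Rightarrow> complex\<close>.\<close>
definition cinner_fun :: "nat \<Rightarrow> (nat \<Rightarrow> complex) \<Rightarrow> (nat \<Rightarrow> complex) \<Rightarrow> complex" where
  "cinner_fun n f g = (\<Sum>k<n. cnj (f k) * g k)"

definition mat_mult_fun :: "nat \<Rightarrow> (nat \<Rightarrow> nat \<Rightarrow> complex) \<Rightarrow> (nat \<Rightarrow> complex) \<Rightarrow> nat \<Rightarrow> complex" where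
  "mat_mult_fun n A f i = (\<Sum>j<n. A i j * f j)"

lemma cnj_cinner_fun: "cnj (cinner_fun n f g) = cinner_fun n g f"
  unfolding cinner_fun_def by (simp add: mult.commute)

lemma cinner_fun_cong:
  "(\<And>k. k < n \<Longrightarrow> f k = f' k) \<Longrightarrow> (\<And>k. k < n \<Longrightarrow> g k = g' k) \<Longrightarrow> cinner_fun n f g = cinner_fun n f' g'"
  unfolding cinner_fun_def by (rule sum.cong) auto

lemma mat_mult_fun_cong: "(\<And>k. k < n \<Longrightarrow> f k = f' k) \<Longrightarrow> mat_mult_fun n A f i = mat_mult_fun n A f' i"
  unfolding mat_mult_fun_def by (rule sum.cong) auto

lemma cinner_fun_sum_right:
  "cinner_fun n z (\<lambda>k. \<Sum>i\<in>I. c i * a i k) = (\<Sum>i\<in>I. c i * cinner_fun n z (a i))"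
  unfolding cinner_fun_def by (simp add: sum_distrib_left sum_distrib_right mult_ac sum.swap[of _ I])

lemma cinner_fun_sum_left:
  "cinner_fun n (\<lambda>k. \<Sum>i\<in>I. c i * a i k) z = (\<Sum>i\<in>I. cnj (c i) * cinner_fun n (a i) z)"
  unfolding cinner_fun_def by (simp add: sum_distrib_left sum_distrib_right mult_ac sum.swap[of _ I])

lemma mat_mult_fun_sum:
  "mat_mult_fun n A (\<lambda>k. \<Sum>i\<in>I. c i * a i k) j = (\<Sum>i\<in>I. c i * mat_mult_fun n A (a i) j)"
  unfolding mat_mult_fun_def by (simp add: sum_distrib_left sum_distrib_right mult_ac sum.swap[of _ I])

lemma cinner_fun_add_right:
  "cinner_fun n z (\<lambda>k. \<alpha> * f k + \<beta> * g k) = \<alpha> * cinner_fun n z f + \<beta> * cinner_fun n z g"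
  unfolding cinner_fun_def by (simp add: sum_distrib_left sum.distrib algebra_simps)

lemma cinner_fun_add_left:
  "cinner_fun n (\<lambda>k. \<alpha> * f k + \<beta> * g k) z = cnj \<alpha> * cinner_fun n f z + cnj \<beta> * cinner_fun n g z"
  unfolding cinner_fun_def by (simp add: sum_distrib_left sum.distrib algebra_simps)

lemma mat_mult_fun_add:
  "mat_mult_fun n A (\<lambda>k. \<alpha> * f k + \<beta> * g k) j = \<alpha> * mat_mult_fun n A f j + \<beta> * mat_mult_fun n A g j"
  unfolding mat_mult_fun_def by (simp add: sum_distrib_left sum.distrib algebra_simps)

lemma cinner_fun_diff_right:
  "cinner_fun n z (\<lambda>k. f k - c * g k) = cinner_fun n z f - c * cinner_fun n z g"
  unfolding cinner_fun_def by (simp add: sum_distrib_left sum_subtractf algebra_simps)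

lemma cinner_fun_diff_left:
  "cinner_fun n (\<lambda>k. f k - c * g k) z = cinner_fun n f z - cnj c * cinner_fun n g z"
  unfolding cinner_fun_def by (simp add: sum_distrib_left sum_subtractf algebra_simps)

lemma mat_mult_fun_diff:
  "mat_mult_fun n A (\<lambda>k. f k - c * g k) j = mat_mult_fun n A f j - c * mat_mult_fun n A g j"
  unfolding mat_mult_fun_def by (simp add: sum_distrib_left sum_subtractf algebra_simps)

lemma cinner_fun_scale_left: "cinner_fun n (\<lambda>k. c * f k) g = cnj c * cinner_fun n f g"
  unfolding cinner_fun_def by (simp add: sum_distrib_left mult_ac)

lemma cinner_fun_scale_right: "cinner_fun n f (\<lambda>k. c * g k) = c * cinner_fun n f g"
  unfolding cinner_fun_def by (simp add: sum_distrib_left mult_ac)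

lemma mat_mult_fun_scale: "mat_mult_fun n A (\<lambda>k. c * f k) j = c * mat_mult_fun n A f j"
  unfolding mat_mult_fun_def by (simp add: sum_distrib_left mult_ac)

lemma cinner_fun_self: "cinner_fun n f f = of_real (\<Sum>k<n. (cmod (f k))\<^sup>2)"
  unfolding cinner_fun_def of_real_sum
  by (rule sum.cong) (simp_all add: complex_norm_square mult.commute del: of_real_power)

lemma cinner_fun_self_nonneg: "0 \<le> Re (cinner_fun n f f)" "Im (cinner_fun n f f) = 0"
  unfolding cinner_fun_self by (simp_all add: sum_nonneg)

lemma cinner_fun_self_eq_0D:
  assumes "cinner_fun n f f = 0" "k < n" shows "f k = 0"
proof -
  have "(\<Sum>k<n. (cmod (f k))\<^sup>2) = 0"
    using assms(1) unfolding cinner_fun_self by (simp only: of_real_eq_0_iff)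
  then have "\<forall>k\<in>{..<n}. (cmod (f k))\<^sup>2 = 0" by (subst (asm) sum_nonneg_eq_0_iff) auto
  then show ?thesis using assms(2) by auto
qed

lemma cinner_fun_self_eq_1_nonzero:
  assumes "cinner_fun n f f = 1" obtains k where "k < n" "f k \<noteq> 0"
  using assms unfolding cinner_fun_def
  by (metis (no_types, lifting) lessThan_iff mult_zero_right sum.neutral zero_neq_one)

lemma cinner_fun_normalize:
  assumes "k < n" "f k \<noteq> 0"
  shows "\<exists>r>0. cinner_fun n (\<lambda>i. f i / of_real r) (\<lambda>i. f i / of_real r) = 1"
proof -
  define s where "s = (\<Sum>i<n. (cmod (f i))\<^sup>2)"
  have "(cmod (f k))\<^sup>2 \<le> s" unfolding s_def using assms by (intro member_le_sum) auto
  moreover have "(cmod (f k))\<^sup>2 > 0" using assms by simp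
  ultimately have s: "s > 0" by linarith
  have "cinner_fun n (\<lambda>i. f i / of_real (sqrt s)) (\<lambda>i. f i / of_real (sqrt s))
      = cinner_fun n f f / (of_real (sqrt s) * of_real (sqrt s))"
    unfolding cinner_fun_def by (simp add: sum_divide_distrib)
  also have "\<dots> = 1"
    using s unfolding cinner_fun_self s_def[symmetric] by (simp flip: of_real_mult)
  finally show ?thesis using s by (intro exI[of _ "sqrt s"]) auto
qed

lemma cinner_fun_hermitian:
  assumes "\<forall>i<n. \<forall>j<n. Y i j = cnj (Y j i)"
  shows "cinner_fun n f (mat_mult_fun n Y g) = cinner_fun n (mat_mult_fun n Y f) g"
proof -
  have "cinner_fun n f (mat_mult_fun n Y g) = (\<Sum>k<n. \<Sum>j<n. cnj (f k) * Y k j * g j)"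
    unfolding cinner_fun_def mat_mult_fun_def by (simp only: sum_distrib_left mult.assoc)
  also have "\<dots> = (\<Sum>j<n. \<Sum>k<n. cnj (f k) * Y k j * g j)" by (rule sum.swap)
  also have "\<dots> = cinner_fun n (mat_mult_fun n Y f) g"
    unfolding cinner_fun_def mat_mult_fun_def
  proof (rule sum.cong[OF refl])
    fix j assume j: "j \<in> {..<n}"
    have "(\<Sum>k<n. cnj (f k) * Y k j * g j) = (\<Sum>k<n. cnj (Y j k * f k) * g j)"
    proof (rule sum.cong[OF refl])
      fix k assume k: "k \<in> {..<n}"
      have "k < n" "j < n" using j k by auto
      then have "Y k j = cnj (Y j k)" using assms by blast
      then show "cnj (f k) * Y k j * g j = cnj (Y j k * f k) * g j" by simp
    qed
    also have "\<dots> = cnj (\<Sum>k<n. Y j k * f k) * g j" by (simp only: cnj_sum sum_distrib_right)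
    finally show "(\<Sum>k<n. cnj (f k) * Y k j * g j) = cnj (\<Sum>k<n. Y j k * f k) * g j" .
  qed
  finally show ?thesis .
qed

section \<open>Orthonormal frames\<close>

definition orthonormal_fun :: "nat \<Rightarrow> nat \<Rightarrow> (nat \<Rightarrow> nat \<Rightarrow> complex) \<Rightarrow> bool" where
  "orthonormal_fun n m a \<longleftrightarrow> (\<forall>i<m. \<forall>j<m. cinner_fun n (a i) (a j) = (if i = j then 1 else 0))"

text \<open>For an orthonormal frame \<open>a\<close> this says that \<open>z\<close> lies in the span of \<open>a 0, \<dots>, a (m - 1)\<close>.\<close>
definition in_span :: "nat \<Rightarrow> nat \<Rightarrow> (nat \<Rightarrow> nat \<Rightarrow> complex) \<Rightarrow> (nat \<Rightarrow> complex) \<Rightarrow> bool" where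
  "in_span n m a z \<longleftrightarrow> (\<forall>k<n. z k = (\<Sum>i<m. cinner_fun n (a i) z * a i k))"

definition trace_form :: "nat \<Rightarrow> (nat \<Rightarrow> nat \<Rightarrow> complex) \<Rightarrow> nat \<Rightarrow> (nat \<Rightarrow> nat \<Rightarrow> complex) \<Rightarrow> complex" where
  "trace_form n A m a = (\<Sum>i<m. cinner_fun n (a i) (mat_mult_fun n A (a i)))"

definition eigvec :: "nat \<Rightarrow> (nat \<Rightarrow> nat \<Rightarrow> complex) \<Rightarrow> complex \<Rightarrow> (nat \<Rightarrow> complex) \<Rightarrow> bool" where
  "eigvec n Y c f \<longleftrightarrow> (\<forall>k<n. mat_mult_fun n Y f k = c * f k)"

lemma orthonormal_fun_mono: "orthonormal_fun n m f \<Longrightarrow> k \<le> m \<Longrightarrow> orthonormal_fun n k f"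
  unfolding orthonormal_fun_def by auto

lemma orthonormal_fun_shift: "orthonormal_fun n (k + m) f \<Longrightarrow> orthonormal_fun n m (\<lambda>j. f (k + j))"
  unfolding orthonormal_fun_def by auto

lemma orthonormal_fun_coeff:
  assumes "orthonormal_fun n m a" "j < m"
  shows "cinner_fun n (a j) (\<lambda>k. \<Sum>i<m. c i * a i k) = c j"
proof -
  have "cinner_fun n (a j) (\<lambda>k. \<Sum>i<m. c i * a i k) = (\<Sum>i<m. c i * cinner_fun n (a j) (a i))"
    by (rule cinner_fun_sum_right)
  also have "\<dots> = (\<Sum>i<m. if i = j then c i else 0)"
    by (rule sum.cong) (use assms in \<open>auto simp: orthonormal_fun_def\<close>)
  finally show ?thesis using assms(2) by simp
qed

lemma cinner_fun_orthonormal_sums: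
  assumes "orthonormal_fun n m a"
  shows "cinner_fun n (\<lambda>k. \<Sum>i<m. c i * a i k) (\<lambda>k. \<Sum>i<m. d i * a i k) = cinner_fun m c d"
proof -
  have "cinner_fun n (\<lambda>k. \<Sum>i<m. c i * a i k) (\<lambda>k. \<Sum>i<m. d i * a i k) = (\<Sum>i<m. cnj (c i) * d i)"
    by (simp add: cinner_fun_sum_left orthonormal_fun_coeff[OF assms])
  then show ?thesis by (simp add: cinner_fun_def)
qed

lemma in_span_sum: "orthonormal_fun n m a \<Longrightarrow> in_span n m a (\<lambda>k. \<Sum>i<m. c i * a i k)"
  unfolding in_span_def using orthonormal_fun_coeff by simp

lemma in_span_basis:
  assumes "orthonormal_fun n m a" "j < m" shows "in_span n m a (a j)"
proof -
  have "(\<Sum>i<m. cinner_fun n (a i) (a j) * a i k) = (\<Sum>i<m. if i = j then a j k else 0)" for k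
    by (rule sum.cong) (use assms in \<open>auto simp: orthonormal_fun_def\<close>)
  then show ?thesis unfolding in_span_def using assms(2) by simp
qed

lemma in_span_add:
  assumes f: "in_span n m a f" and g: "in_span n m a g"
    and h: "\<And>k. k < n \<Longrightarrow> h k = \<alpha> * f k + \<beta> * g k"
  shows "in_span n m a h"
  unfolding in_span_def
proof (intro allI impI)
  fix k assume k: "k < n"
  have "cinner_fun n (a i) h = cinner_fun n (a i) (\<lambda>k. \<alpha> * f k + \<beta> * g k)" for i
    by (rule cinner_fun_cong) (use h in auto)
  then have coeff: "cinner_fun n (a i) h = \<alpha> * cinner_fun n (a i) f + \<beta> * cinner_fun n (a i) g" for i
    by (simp add: cinner_fun_add_right)
  have "h k = \<alpha> * (\<Sum>i<m. cinner_fun n (a i) f * a i k) + \<beta> * (\<Sum>i<m. cinner_fun n (a i) g * a i k)"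
    using h[OF k] f g k unfolding in_span_def by simp
  also have "\<dots> = (\<Sum>i<m. cinner_fun n (a i) h * a i k)"
    by (simp add: coeff sum_distrib_left sum.distrib algebra_simps)
  finally show "h k = (\<Sum>i<m. cinner_fun n (a i) h * a i k)" .
qed

lemma parseval:
  assumes "in_span n m a z"
  shows "(\<Sum>i<m. cinner_fun n z (a i) * cinner_fun n (a i) g) = cinner_fun n z g"
proof -
  have "cinner_fun n z g = cinner_fun n (\<lambda>k. \<Sum>i<m. cinner_fun n (a i) z * a i k) g"
    by (rule cinner_fun_cong) (use assms in \<open>auto simp: in_span_def\<close>)
  also have "\<dots> = (\<Sum>i<m. cinner_fun n z (a i) * cinner_fun n (a i) g)"
    by (simp add: cinner_fun_sum_left cnj_cinner_fun)
  finally show ?thesis by simp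
qed

lemma parseval_mat_mult:
  assumes "in_span n m a z"
  shows "(\<Sum>i<m. cinner_fun n (a i) z * cinner_fun n g (mat_mult_fun n A (a i)))
    = cinner_fun n g (mat_mult_fun n A z)"
proof -
  have "cinner_fun n g (mat_mult_fun n A z)
      = cinner_fun n g (mat_mult_fun n A (\<lambda>k. \<Sum>i<m. cinner_fun n (a i) z * a i k))"
    by (rule cinner_fun_cong) (use assms in \<open>auto simp: in_span_def intro: mat_mult_fun_cong\<close>)
  also have "\<dots> = cinner_fun n g (\<lambda>j. \<Sum>i<m. cinner_fun n (a i) z * mat_mult_fun n A (a i) j)"
    by (rule cinner_fun_cong) (simp_all add: mat_mult_fun_sum)
  also have "\<dots> = (\<Sum>i<m. cinner_fun n (a i) z * cinner_fun n g (mat_mult_fun n A (a i)))"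
    by (rule cinner_fun_sum_right)
  finally show ?thesis by simp
qed

lemma orthogonal_in_span:
  assumes "\<forall>i<m. cinner_fun n q (a i) = 0" "in_span n m a z" shows "cinner_fun n q z = 0"
proof -
  have "cinner_fun n q z = cinner_fun n q (\<lambda>k. \<Sum>i<m. cinner_fun n (a i) z * a i k)"
    by (rule cinner_fun_cong) (use assms(2) in \<open>auto simp: in_span_def\<close>)
  also have "\<dots> = 0" by (simp add: cinner_fun_sum_right assms(1))
  finally show ?thesis .
qed

lemma eigvec_orthogonal:
  assumes "\<forall>i<n. \<forall>j<n. Y i j = cnj (Y j i)"
    and "eigvec n Y (of_real c) f" "eigvec n Y (of_real d) g" "c \<noteq> d"
  shows "cinner_fun n f g = 0"
proof -
  have "cinner_fun n f (mat_mult_fun n Y g) = cinner_fun n f (\<lambda>k. of_real d * g k)"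
    by (rule cinner_fun_cong) (use assms(3) in \<open>auto simp: eigvec_def\<close>)
  moreover have "cinner_fun n (mat_mult_fun n Y f) g = cinner_fun n (\<lambda>k. of_real c * f k) g"
    by (rule cinner_fun_cong) (use assms(2) in \<open>auto simp: eigvec_def\<close>)
  ultimately have "(of_real c - of_real d) * cinner_fun n f g = 0"
    using cinner_fun_hermitian[OF assms(1), of f g]
    by (simp add: cinner_fun_scale_left cinner_fun_scale_right algebra_simps)
  with assms(4) show ?thesis by simp
qed

lemma eigvec_in_span:
  assumes "\<forall>i<m. eigvec n Y c (a i)" "in_span n m a z" shows "eigvec n Y c z"
  unfolding eigvec_def
proof (intro allI impI)
  fix k assume k: "k < n"
  have "mat_mult_fun n Y z k = mat_mult_fun n Y (\<lambda>k. \<Sum>i<m. cinner_fun n (a i) z * a i k) k"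
    by (rule mat_mult_fun_cong) (use assms(2) in \<open>auto simp: in_span_def\<close>)
  also have "\<dots> = (\<Sum>i<m. cinner_fun n (a i) z * (c * a i k))"
    by (simp add: mat_mult_fun_sum) (rule sum.cong, use assms(1) k in \<open>auto simp: eigvec_def\<close>)
  also have "\<dots> = c * z k"
  proof -
    have zk: "z k = (\<Sum>i<m. cinner_fun n (a i) z * a i k)"
      using assms(2) k unfolding in_span_def by blast
    show ?thesis by (subst zk) (simp add: sum_distrib_left mult_ac)
  qed
  finally show "mat_mult_fun n Y z k = c * z k" .
qed

section \<open>Toeplitz--Hausdorff for two vectors\<close>

definition lincomb2 :: "complex \<Rightarrow> (nat \<Rightarrow> complex) \<Rightarrow> complex \<Rightarrow> (nat \<Rightarrow> complex) \<Rightarrow> nat \<Rightarrow> complex" where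
  "lincomb2 U x V y = (\<lambda>k. U * x k + V * y k)"

lemma cinner_fun_lincomb2:
  "cinner_fun n (lincomb2 U x V y) (lincomb2 U' x V' y) =
    cnj U * U' * cinner_fun n x x + cnj U * V' * cinner_fun n x y
    + cnj V * U' * cinner_fun n y x + cnj V * V' * cinner_fun n y y"
  unfolding lincomb2_def by (simp add: cinner_fun_add_left cinner_fun_add_right algebra_simps)

lemma cinner_fun_mat_mult_lincomb2:
  "cinner_fun n f (mat_mult_fun n A (lincomb2 U x V y))
    = U * cinner_fun n f (mat_mult_fun n A x) + V * cinner_fun n f (mat_mult_fun n A y)"
proof -
  have "cinner_fun n f (mat_mult_fun n A (lincomb2 U x V y))
      = cinner_fun n f (\<lambda>j. U * mat_mult_fun n A x j + V * mat_mult_fun n A y j)"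
    by (rule cinner_fun_cong) (simp_all add: lincomb2_def mat_mult_fun_add)
  then show ?thesis by (simp add: cinner_fun_add_right)
qed

lemma quadratic_form_lincomb2:
  "cinner_fun n (lincomb2 U x V y) (mat_mult_fun n A (lincomb2 U x V y)) =
    cnj U * U * cinner_fun n x (mat_mult_fun n A x) + cnj U * V * cinner_fun n x (mat_mult_fun n A y)
    + cnj V * U * cinner_fun n y (mat_mult_fun n A x) + cnj V * V * cinner_fun n y (mat_mult_fun n A y)"
proof -
  have "cinner_fun n (lincomb2 U x V y) (mat_mult_fun n A (lincomb2 U x V y))
      = cnj U * cinner_fun n x (mat_mult_fun n A (lincomb2 U x V y))
        + cnj V * cinner_fun n y (mat_mult_fun n A (lincomb2 U x V y))"
    unfolding lincomb2_def by (simp add: cinner_fun_add_left)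
  then show ?thesis by (simp add: cinner_fun_mat_mult_lincomb2 algebra_simps)
qed

lemma unimodular_rotate_real: "\<exists>\<omega>. cnj \<omega> * \<omega> = 1 \<and> Im (\<omega> * c) = 0"
proof (cases "c = 0")
  case False
  then show ?thesis
    by (intro exI[of _ "cnj c / of_real (cmod c)"])
       (auto simp: complex_norm_square[symmetric] power2_eq_square field_simps norm_divide
             simp del: of_real_power complex_mult_cnj)
qed (intro exI[of _ 1], simp)

lemma quadratic_form_scale:
  "cinner_fun n (\<lambda>k. c * z k) (mat_mult_fun n A (\<lambda>k. c * z k))
    = cnj c * c * cinner_fun n z (mat_mult_fun n A z)"
proof -
  have "mat_mult_fun n A (\<lambda>k. c * z k) = (\<lambda>j. c * mat_mult_fun n A z j)"
    by (rule ext) (rule mat_mult_fun_scale)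
  then show ?thesis by (simp add: cinner_fun_scale_left cinner_fun_scale_right)
qed

lemma quadratic_form_parallel:
  assumes x: "cinner_fun n x x = 1" and y: "cinner_fun n y y = 1"
    and xy: "\<And>k. k < n \<Longrightarrow> y k = c * x k"
  shows "cinner_fun n y (mat_mult_fun n A y) = cinner_fun n x (mat_mult_fun n A x)"
proof -
  have "cinner_fun n y y = cinner_fun n (\<lambda>k. c * x k) (\<lambda>k. c * x k)"
    using xy by (intro cinner_fun_cong) auto
  then have cc: "cnj c * c = 1" using x y by (simp add: cinner_fun_scale_left cinner_fun_scale_right)
  have "cinner_fun n y (mat_mult_fun n A y)
      = cinner_fun n (\<lambda>k. c * x k) (mat_mult_fun n A (\<lambda>k. c * x k))"
    using xy by (intro cinner_fun_cong) (auto intro: mat_mult_fun_cong)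
  then show ?thesis using cc by (simp add: quadratic_form_scale)
qed

lemma lincomb2_self_nonzero:
  assumes x: "cinner_fun n x x = 1" and y: "cinner_fun n y y = 1"
    and ab: "cinner_fun n x (mat_mult_fun n A x) \<noteq> cinner_fun n y (mat_mult_fun n A y)"
    and UV: "U \<noteq> 0 \<or> V \<noteq> 0"
  shows "cinner_fun n (lincomb2 U x V y) (lincomb2 U x V y) \<noteq> 0"
proof
  assume "cinner_fun n (lincomb2 U x V y) (lincomb2 U x V y) = 0"
  then have z0: "U * x k + V * y k = 0" if "k < n" for k
    using cinner_fun_self_eq_0D that unfolding lincomb2_def by blast
  show False
  proof (cases "V = 0")
    case True
    then have "x k = 0" if "k < n" for k using z0[OF that] UV by simp
    then have "cinner_fun n x x = 0" unfolding cinner_fun_def by simp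
    with x show False by simp
  next
    case False
    then have "y k = (- U / V) * x k" if "k < n" for k
      using z0[OF that] by (simp add: field_simps add_eq_0_iff)
    with ab show False using quadratic_form_parallel[OF x y] by metis
  qed
qed

text \<open>With \<open>a = \<langle>x, A x\<rangle> \<noteq> b = \<langle>y, A y\<rangle>\<close>, write \<open>\<langle>x, A y\<rangle> = a \<langle>x, y\<rangle> + (b - a) p\<close> and
  \<open>\<langle>y, A x\<rangle> = a \<langle>y, x\<rangle> + (b - a) q\<close>. For \<open>z = (1 - \<tau>) x + \<tau> \<omega> y\<close> with the phase \<open>\<omega>\<close> chosen
  to make \<open>\<omega> p + cnj \<omega> q\<close> real, \<open>\<langle>z, A z\<rangle> - a \<langle>z, z\<rangle>\<close> is \<open>b - a\<close> times a real continuous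
  function of \<open>\<tau>\<close>, and the intermediate value theorem adjusts its ratio to \<open>\<langle>z, z\<rangle>\<close>.\<close>
lemma lincomb2_quadratic_form_ratio:
  assumes x: "cinner_fun n x x = 1" and y: "cinner_fun n y y = 1" and t: "0 \<le> t" "t \<le> 1"
  obtains U V where "U \<noteq> 0 \<or> V \<noteq> 0"
    "cinner_fun n (lincomb2 U x V y) (mat_mult_fun n A (lincomb2 U x V y))
       = (of_real (1 - t) * cinner_fun n x (mat_mult_fun n A x)
          + of_real t * cinner_fun n y (mat_mult_fun n A y)) * cinner_fun n (lincomb2 U x V y) (lincomb2 U x V y)"
proof -
  define a where "a = cinner_fun n x (mat_mult_fun n A x)"
  define b where "b = cinner_fun n y (mat_mult_fun n A y)"
  show ?thesis
  proof (cases "a = b")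
    case True
    have "lincomb2 1 x 0 y = x" by (simp add: lincomb2_def)
    then show ?thesis using that[of 1 0] x True
      by (simp add: a_def[symmetric] b_def[symmetric] algebra_simps flip: of_real_add)
  next
    case False
    define p where "p = (cinner_fun n x (mat_mult_fun n A y) - a * cinner_fun n x y) / (b - a)"
    define q where "q = (cinner_fun n y (mat_mult_fun n A x) - a * cinner_fun n y x) / (b - a)"
    obtain \<omega> where \<omega>: "cnj \<omega> * \<omega> = 1" "Im (\<omega> * (p - cnj q)) = 0"
      using unimodular_rotate_real by blast
    define eR where "eR = Re (\<omega> * p + cnj \<omega> * q)"
    have E: "\<omega> * p + cnj \<omega> * q = of_real eR"
      using \<omega>(2) unfolding eR_def by (simp add: complex_eq_iff algebra_simps)
    define gR where "gR = Re (\<omega> * cinner_fun n x y + cnj \<omega> * cinner_fun n y x)"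
    have G: "\<omega> * cinner_fun n x y + cnj \<omega> * cinner_fun n y x = of_real gR"
      unfolding gR_def cnj_cinner_fun[of n x y, symmetric] by (simp add: complex_eq_iff algebra_simps)
    define N where "N \<tau> = (1 - \<tau>)\<^sup>2 + \<tau>\<^sup>2 + (1 - \<tau>) * \<tau> * gR" for \<tau> :: real
    have "\<exists>\<tau>. 0 \<le> \<tau> \<and> \<tau> \<le> 1 \<and> (1 - \<tau>) * \<tau> * eR + \<tau>\<^sup>2 - t * N \<tau> = 0"
      by (rule IVT') (use t in \<open>auto simp: N_def intro!: continuous_intros\<close>)
    then obtain \<tau> where \<tau>: "0 \<le> \<tau>" "\<tau> \<le> 1" "(1 - \<tau>) * \<tau> * eR + \<tau>\<^sup>2 = t * N \<tau>" by auto
    define U where "U = complex_of_real (1 - \<tau>)"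
    define V where "V = complex_of_real \<tau> * \<omega>"
    define z where "z = lincomb2 U x V y"
    have VV: "cnj V * V = of_real (\<tau>\<^sup>2)"
      using \<omega>(1) unfolding V_def by (simp add: power2_eq_square algebra_simps)
    have UU: "cnj U * U = of_real ((1 - \<tau>)\<^sup>2)" unfolding U_def by (simp add: power2_eq_square)
    have "cnj U * V * cinner_fun n x y + cnj V * U * cinner_fun n y x
        = of_real ((1 - \<tau>) * \<tau>) * (\<omega> * cinner_fun n x y + cnj \<omega> * cinner_fun n y x)"
      unfolding U_def V_def by (simp add: algebra_simps)
    then have UV:
      "cnj U * V * cinner_fun n x y + cnj V * U * cinner_fun n y x = of_real ((1 - \<tau>) * \<tau> * gR)"
      unfolding G by simp
    have "cnj U * V * p + cnj V * U * q = of_real ((1 - \<tau>) * \<tau>) * (\<omega> * p + cnj \<omega> * q)"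
      unfolding U_def V_def by (simp add: algebra_simps)
    then have UVpq: "cnj U * V * p + cnj V * U * q = of_real ((1 - \<tau>) * \<tau> * eR)"
      unfolding E by simp
    have "cinner_fun n z z
        = cnj U * U + (cnj U * V * cinner_fun n x y + cnj V * U * cinner_fun n y x) + cnj V * V"
      unfolding z_def cinner_fun_lincomb2 x y by simp
    also have "\<dots> = of_real (N \<tau>)"
      unfolding UU UV VV N_def of_real_add[symmetric] by (simp add: algebra_simps)
    finally have zz: "cinner_fun n z z = of_real (N \<tau>)" .
    have pq: "cinner_fun n x (mat_mult_fun n A y) = a * cinner_fun n x y + (b - a) * p"
      "cinner_fun n y (mat_mult_fun n A x) = a * cinner_fun n y x + (b - a) * q"
      unfolding p_def q_def using False by (simp_all add: field_simps)
    have "cinner_fun n z (mat_mult_fun n A z)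
        = a * cinner_fun n z z + (b - a) * ((cnj U * V * p + cnj V * U * q) + cnj V * V)"
      unfolding z_def quadratic_form_lincomb2 cinner_fun_lincomb2 pq a_def[symmetric] b_def[symmetric] x y
      by (simp add: algebra_simps)
    also have "(cnj U * V * p + cnj V * U * q) + cnj V * V = of_real t * cinner_fun n z z"
      unfolding UVpq VV zz of_real_add[symmetric] \<tau>(3) by simp
    finally have
      "cinner_fun n z (mat_mult_fun n A z) = (of_real (1 - t) * a + of_real t * b) * cinner_fun n z z"
      by (simp add: algebra_simps)
    moreover have "U \<noteq> 0 \<or> V \<noteq> 0" using \<omega>(1) unfolding U_def V_def by auto
    ultimately show ?thesis using that unfolding z_def a_def b_def by blast
  qed
qed

lemma toeplitz_hausdorff_two:
  assumes x: "cinner_fun n x x = 1" and y: "cinner_fun n y y = 1" and t: "0 \<le> t" "t \<le> 1"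
  shows "\<exists>U V. cinner_fun n (lincomb2 U x V y) (lincomb2 U x V y) = 1 \<and>
      cinner_fun n (lincomb2 U x V y) (mat_mult_fun n A (lincomb2 U x V y))
        = of_real (1 - t) * cinner_fun n x (mat_mult_fun n A x)
          + of_real t * cinner_fun n y (mat_mult_fun n A y)"
proof (cases "cinner_fun n x (mat_mult_fun n A x) = cinner_fun n y (mat_mult_fun n A y)")
  case True
  have "lincomb2 1 x 0 y = x" by (simp add: lincomb2_def)
  then show ?thesis using x True
    by (intro exI[of _ 1] exI[of _ 0]) (simp add: algebra_simps flip: of_real_add)
next
  case False
  obtain U V where UV: "U \<noteq> 0 \<or> V \<noteq> 0"
    and ratio: "cinner_fun n (lincomb2 U x V y) (mat_mult_fun n A (lincomb2 U x V y))
      = (of_real (1 - t) * cinner_fun n x (mat_mult_fun n A x)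
          + of_real t * cinner_fun n y (mat_mult_fun n A y)) * cinner_fun n (lincomb2 U x V y) (lincomb2 U x V y)"
    using lincomb2_quadratic_form_ratio[OF x y t] by blast
  define z where "z = lincomb2 U x V y"
  define N where "N = Re (cinner_fun n z z)"
  have "cinner_fun n z z = of_real N" "cinner_fun n z z \<noteq> 0"
    using cinner_fun_self_nonneg(2)[of n z] lincomb2_self_nonzero[OF x y False UV]
    unfolding z_def N_def by (simp_all add: complex_eq_iff)
  moreover have "N \<ge> 0" unfolding N_def by (rule cinner_fun_self_nonneg)
  ultimately have zz: "cinner_fun n z z = of_real N" and N: "N > 0" by auto
  define s where "s = complex_of_real (1 / sqrt N)"
  have ss: "cnj s * s * cinner_fun n z z = 1"
    unfolding s_def zz using N by (simp flip: of_real_mult)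
  have scaled: "lincomb2 (s * U) x (s * V) y = (\<lambda>k. s * z k)"
    unfolding z_def lincomb2_def by (simp add: algebra_simps)
  show ?thesis
  proof (intro exI conjI)
    show "cinner_fun n (lincomb2 (s * U) x (s * V) y) (lincomb2 (s * U) x (s * V) y) = 1"
      unfolding scaled using ss by (simp add: cinner_fun_scale_left cinner_fun_scale_right mult.assoc)
    show "cinner_fun n (lincomb2 (s * U) x (s * V) y) (mat_mult_fun n A (lincomb2 (s * U) x (s * V) y))
        = of_real (1 - t) * cinner_fun n x (mat_mult_fun n A x)
          + of_real t * cinner_fun n y (mat_mult_fun n A y)"
    proof -
      have "cnj s * s * cinner_fun n z (mat_mult_fun n A z)
          = (of_real (1 - t) * cinner_fun n x (mat_mult_fun n A x)
              + of_real t * cinner_fun n y (mat_mult_fun n A y)) * (cnj s * s * cinner_fun n z z)"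
        using ratio unfolding z_def[symmetric] by (simp add: mult_ac)
      then show ?thesis unfolding scaled quadratic_form_scale ss by simp
    qed
  qed
qed

section \<open>Householder reflections\<close>

text \<open>Householder reflection across the hyperplane orthogonal to \<open>w\<close>
  (the identity for \<open>w = 0\<close>, since \<open>z / 0 = 0\<close>).\<close>
definition reflect :: "nat \<Rightarrow> (nat \<Rightarrow> complex) \<Rightarrow> (nat \<Rightarrow> complex) \<Rightarrow> nat \<Rightarrow> complex" where
  "reflect n w f = (\<lambda>k. f k - 2 * cinner_fun n w f / cinner_fun n w w * w k)"

lemma cinner_fun_reflect: "cinner_fun n (reflect n w f) (reflect n w g) = cinner_fun n f g"
proof -
  define N where "N = cinner_fun n w w"
  define c where "c h = 2 * cinner_fun n w h / N" for h
  have R: "reflect n w h = (\<lambda>k. h k - c h * w k)" for h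
    unfolding reflect_def c_def N_def ..
  have "cinner_fun n (reflect n w f) (reflect n w g)
      = cinner_fun n f g - c g * cinner_fun n f w - cnj (c f) * (cinner_fun n w g - c g * N)"
    unfolding R N_def by (simp add: cinner_fun_diff_left cinner_fun_diff_right algebra_simps)
  also have "\<dots> = cinner_fun n f g"
  proof (cases "N = 0")
    case False
    have "cnj N = N" unfolding N_def by (rule cnj_cinner_fun)
    then show ?thesis using False unfolding c_def by (simp add: cnj_cinner_fun field_simps)
  qed (simp add: c_def)
  finally show ?thesis .
qed

lemma reflect_onto:
  assumes e: "cinner_fun n e e = 1" and x: "cinner_fun n x x = 1" and real: "Im (cinner_fun n x e) = 0"
    and k: "k < n"
  shows "reflect n (\<lambda>k. e k - x k) e k = x k"
proof -
  define w where "w = (\<lambda>k. e k - x k)"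
  define r where "r = cinner_fun n x e"
  have "cnj r = r" using real by (simp add: r_def complex_eq_iff)
  then have r_cnj: "cinner_fun n e x = r" using cnj_cinner_fun[of n x e] unfolding r_def by simp
  have we: "cinner_fun n w e = 1 - r"
    using e unfolding r_def w_def cinner_fun_def by (simp add: sum_subtractf algebra_simps)
  have wx: "cinner_fun n w x = r - 1"
    using x r_cnj unfolding w_def cinner_fun_def by (simp add: sum_subtractf algebra_simps)
  have "cinner_fun n w w = cinner_fun n w e - cinner_fun n w x"
    unfolding cinner_fun_def by (simp add: w_def sum_subtractf sum.distrib algebra_simps)
  then have ww: "cinner_fun n w w = 2 - 2 * r" unfolding we wx by simp
  show ?thesis
  proof (cases "r = 1")
    case True
    then have "cinner_fun n w w = 0" using ww by simp
    then have "w k = 0" using cinner_fun_self_eq_0D k by blast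
    then show ?thesis unfolding reflect_def w_def[symmetric] by (simp add: w_def)
  next
    case False
    then have "2 * cinner_fun n w e / cinner_fun n w w = 1" unfolding we ww by (simp add: field_simps)
    then show ?thesis unfolding reflect_def w_def[symmetric] by (simp add: w_def)
  qed
qed

lemma trace_form_reflect:
  assumes w: "in_span n m a w"
  shows "trace_form n A m (\<lambda>j. reflect n w (a j)) = trace_form n A m a"
proof -
  define N where "N = cinner_fun n w w"
  define c where "c h = 2 * cinner_fun n w h / N" for h
  define WAw where "WAw = cinner_fun n w (mat_mult_fun n A w)"
  have R: "reflect n w h = (\<lambda>k. h k - c h * w k)" for h
    unfolding reflect_def c_def N_def ..
  have c_cnj: "cnj (c h) = 2 * cinner_fun n h w / N" for h
    unfolding c_def N_def by (simp add: cnj_cinner_fun)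
  have expand: "cinner_fun n (reflect n w h) (mat_mult_fun n A (reflect n w h))
      = cinner_fun n h (mat_mult_fun n A h) - c h * cinner_fun n h (mat_mult_fun n A w)
        - cnj (c h) * cinner_fun n w (mat_mult_fun n A h) + cnj (c h) * c h * WAw" for h
  proof -
    have "cinner_fun n (reflect n w h) (mat_mult_fun n A (reflect n w h))
        = cinner_fun n (reflect n w h) (\<lambda>j. mat_mult_fun n A h j - c h * mat_mult_fun n A w j)"
      unfolding R by (rule cinner_fun_cong) (simp_all only: mat_mult_fun_diff)
    then show ?thesis
      unfolding WAw_def by (simp add: R cinner_fun_diff_left cinner_fun_diff_right algebra_simps)
  qed
  have S1: "(\<Sum>j<m. c (a j) * cinner_fun n (a j) (mat_mult_fun n A w)) = 2 / N * WAw"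
    unfolding c_def WAw_def parseval[OF w, of "mat_mult_fun n A w", symmetric]
    by (simp add: sum_distrib_left algebra_simps)
  have S2: "(\<Sum>j<m. cnj (c (a j)) * cinner_fun n w (mat_mult_fun n A (a j))) = 2 / N * WAw"
    unfolding c_cnj WAw_def parseval_mat_mult[OF w, of w A, symmetric]
    by (simp add: sum_distrib_left algebra_simps)
  have S3: "(\<Sum>j<m. cnj (c (a j)) * c (a j)) = 4 / (N * N) * N"
  proof -
    have "(\<Sum>j<m. cnj (c (a j)) * c (a j))
        = 4 / (N * N) * (\<Sum>j<m. cinner_fun n w (a j) * cinner_fun n (a j) w)"
      unfolding c_cnj unfolding c_def by (simp add: sum_distrib_left algebra_simps)
    then show ?thesis unfolding parseval[OF w] N_def .
  qed
  have "trace_form n A m (\<lambda>j. reflect n w (a j)) = trace_form n A m a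
      - (\<Sum>j<m. c (a j) * cinner_fun n (a j) (mat_mult_fun n A w))
      - (\<Sum>j<m. cnj (c (a j)) * cinner_fun n w (mat_mult_fun n A (a j)))
      + (\<Sum>j<m. cnj (c (a j)) * c (a j)) * WAw"
    unfolding trace_form_def expand by (simp add: sum_subtractf sum.distrib sum_distrib_right)
  also have "\<dots> = trace_form n A m a" unfolding S1 S2 S3
    by (cases "N = 0") (simp_all add: field_simps)
  finally show ?thesis .
qed

lemma orthonormal_fun_rephase:
  assumes a: "orthonormal_fun n m a" and p: "p < m" and \<omega>: "cnj \<omega> * \<omega> = 1"
    and x: "\<And>k. k < n \<Longrightarrow> x k = \<omega> * a p k"
  shows "orthonormal_fun n m (a(p := x))" "trace_form n A m (a(p := x)) = trace_form n A m a"
proof -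
  have x_eq: "cinner_fun n x g = cinner_fun n (\<lambda>k. \<omega> * a p k) g"
    "cinner_fun n g x = cinner_fun n g (\<lambda>k. \<omega> * a p k)" for g
    using x by (auto intro: cinner_fun_cong)
  have ap: "cinner_fun n (a p) (a p) = 1" using a p by (simp add: orthonormal_fun_def)
  then have xx: "cinner_fun n x x = 1"
    unfolding x_eq using \<omega> by (simp add: cinner_fun_scale_left cinner_fun_scale_right)
  have xa: "cinner_fun n x (a j) = 0" "cinner_fun n (a j) x = 0" if "j < m" "j \<noteq> p" for j
    using a p that unfolding x_eq orthonormal_fun_def
    by (simp_all add: cinner_fun_scale_left cinner_fun_scale_right)
  show "orthonormal_fun n m (a(p := x))"
    using a xx xa unfolding orthonormal_fun_def by auto
  show "trace_form n A m (a(p := x)) = trace_form n A m a"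
    unfolding trace_form_def using p quadratic_form_parallel[OF ap xx x] by (intro sum.cong) auto
qed

text \<open>The phase \<open>\<omega>\<close> makes \<open>\<langle>x', a p\<rangle>\<close> real for \<open>x' = cnj \<omega> x\<close>, so that the reflection across
  \<open>(a p - x')\<^sup>\<bottom>\<close> sends \<open>a p\<close> to \<open>x'\<close>.\<close>
lemma orthonormal_exchange:
  assumes a: "orthonormal_fun n m a" and p: "p < m"
    and x_span: "in_span n m a x" and x: "cinner_fun n x x = 1"
  shows "\<exists>a'. orthonormal_fun n m a' \<and> a' p = x \<and> (\<forall>j<m. in_span n m a (a' j)) \<and>
    trace_form n A m a' = trace_form n A m a"
proof -
  obtain \<omega> where \<omega>: "cnj \<omega> * \<omega> = 1" "Im (\<omega> * cinner_fun n x (a p)) = 0"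
    using unimodular_rotate_real by blast
  define x' where "x' k = cnj \<omega> * x k" for k
  define w where "w k = a p k - x' k" for k
  define b where "b j = reflect n w (a j)" for j
  have "cinner_fun n x' x' = cnj \<omega> * \<omega> * cinner_fun n x x"
    unfolding x'_def by (simp add: cinner_fun_scale_left cinner_fun_scale_right algebra_simps)
  then have x': "cinner_fun n x' x' = 1" using \<omega>(1) x by simp
  have "Im (cinner_fun n x' (a p)) = 0"
    using \<omega>(2) unfolding x'_def by (simp add: cinner_fun_scale_left)
  then have bp: "b p k = x' k" if "k < n" for k
    unfolding b_def w_def using reflect_onto[OF _ x' _ that] a p by (auto simp: orthonormal_fun_def)
  have b: "orthonormal_fun n m b"
    using a unfolding orthonormal_fun_def b_def cinner_fun_reflect .
  have w_span: "in_span n m a w"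
    by (rule in_span_add[OF in_span_basis[OF a p] x_span, of _ 1 "- cnj \<omega>"]) (simp add: w_def x'_def)
  have b_span: "in_span n m a (b j)" if "j < m" for j
    by (rule in_span_add[OF in_span_basis[OF a that] w_span,
          of _ 1 "- (2 * cinner_fun n w (a j) / cinner_fun n w w)"])
       (simp add: b_def reflect_def)
  have x_rephase: "x k = \<omega> * b p k" if "k < n" for k
    using bp[OF that] \<omega>(1) unfolding x'_def by (simp add: mult.assoc[symmetric] mult.commute)
  show ?thesis
  proof (intro exI conjI allI impI)
    show "orthonormal_fun n m (b(p := x))"
      by (rule orthonormal_fun_rephase(1)[OF b p \<omega>(1) x_rephase])
    have "trace_form n A m (b(p := x)) = trace_form n A m b"
      by (rule orthonormal_fun_rephase(2)[OF b p \<omega>(1) x_rephase])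
    also have "\<dots> = trace_form n A m a"
      unfolding b_def by (rule trace_form_reflect[OF w_span])
    finally show "trace_form n A m (b(p := x)) = trace_form n A m a" .
  qed (use x_span b_span in auto)
qed

section \<open>Compatible unit vectors in two frames\<close>

lemma vec_nonzero_component:
  assumes "v \<in> carrier_vec m" "v \<noteq> 0\<^sub>v m" obtains i where "i < m" "v $ i \<noteq> 0"
  using assms by (metis eq_vecI carrier_vecD index_zero_vec)

lemma exists_unit_eigvec_coeffs:
  fixes F :: "nat \<Rightarrow> nat \<Rightarrow> complex" assumes m: "0 < m"
  shows "\<exists>\<mu> \<alpha>. cinner_fun m \<alpha> \<alpha> = 1 \<and> (\<forall>i<m. (\<Sum>j<m. F i j * \<alpha> j) = \<mu> * \<alpha> i)"
proof -
  define H :: "complex mat" where "H = mat m m (\<lambda>(i, j). F i j)"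
  have H: "H \<in> carrier_mat m m" unfolding H_def by simp
  have "\<not> constant (poly (char_poly H))"
    using m degree_monic_char_poly[OF H] by (simp add: constant_degree)
  then obtain \<mu> where "poly (char_poly H) \<mu> = 0" using fundamental_theorem_of_algebra by blast
  then have "eigenvalue H \<mu>" using eigenvalue_root_char_poly[OF H] by simp
  then obtain v where v: "v \<in> carrier_vec m" "v \<noteq> 0\<^sub>v m" "H *\<^sub>v v = \<mu> \<cdot>\<^sub>v v"
    unfolding eigenvalue_def eigenvector_def using H by auto
  have Hv: "(\<Sum>j<m. F i j * v $ j) = \<mu> * v $ i" if "i < m" for i
    using arg_cong[OF v(3), of "\<lambda>u. u $ i"] that v(1)
    by (simp add: H_def scalar_prod_def atLeast0LessThan)
  obtain i0 where "i0 < m" "v $ i0 \<noteq> 0" using vec_nonzero_component[OF v(1,2)] .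
  then obtain r where r: "r > 0" "cinner_fun m (\<lambda>i. v $ i / of_real r) (\<lambda>i. v $ i / of_real r) = 1"
    using cinner_fun_normalize by blast
  have "(\<Sum>j<m. F i j * (v $ j / of_real r)) = \<mu> * (v $ i / of_real r)" if "i < m" for i
    using Hv[OF that] by (simp add: sum_divide_distrib[symmetric])
  with r show ?thesis by blast
qed

lemma exists_unit_null_coeffs:
  fixes F :: "nat \<Rightarrow> nat \<Rightarrow> complex"
  assumes "i0 < m" "c i0 \<noteq> 0" and left_null: "\<forall>j<m. (\<Sum>i<m. c i * F i j) = 0"
  shows "\<exists>g. cinner_fun m g g = 1 \<and> (\<forall>i<m. (\<Sum>j<m. F i j * g j) = 0)"
proof -
  define M :: "complex mat" where "M = mat m m (\<lambda>(i, j). F i j)"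
  have M: "M \<in> carrier_mat m m" unfolding M_def by simp
  have "vec m c \<noteq> 0\<^sub>v m" using assms(1,2) by (metis index_vec index_zero_vec(1))
  moreover have "transpose_mat M *\<^sub>v vec m c = 0\<^sub>v m"
    using left_null M
    by (intro eq_vecI) (simp_all add: M_def scalar_prod_def atLeast0LessThan mult.commute)
  ultimately have "det (transpose_mat M) = 0"
    using det_0_iff_vec_prod_zero_field[of "transpose_mat M" m] M vec_carrier[of m c]
    by (metis carrier_matD transpose_carrier_mat)
  then have "det M = 0" using det_transpose[OF M] by simp
  then obtain v where v: "v \<in> carrier_vec m" "v \<noteq> 0\<^sub>v m" "M *\<^sub>v v = 0\<^sub>v m"
    using det_0_iff_vec_prod_zero_field[OF M] by auto
  have Mv: "(\<Sum>j<m. F i j * v $ j) = 0" if "i < m" for i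
    using arg_cong[OF v(3), of "\<lambda>u. u $ i"] that v(1)
    by (simp add: M_def scalar_prod_def atLeast0LessThan)
  obtain j0 where "j0 < m" "v $ j0 \<noteq> 0" using vec_nonzero_component[OF v(1,2)] .
  then obtain r where r: "r > 0" "cinner_fun m (\<lambda>j. v $ j / of_real r) (\<lambda>j. v $ j / of_real r) = 1"
    using cinner_fun_normalize by blast
  have "(\<Sum>j<m. F i j * (v $ j / of_real r)) = 0" if "i < m" for i
    using Mv[OF that] by (simp add: sum_divide_distrib[symmetric])
  with r show ?thesis by blast
qed

text \<open>The coefficients of \<open>x\<close> form an eigenvector of \<open>G G\<^sup>*\<close>, where \<open>G\<close> is the Gram matrix
  \<open>\<langle>a\<^sub>i, b\<^sub>j\<rangle>\<close> of the two frames; if \<open>G\<^sup>* x = 0\<close>, then \<open>G\<close> is singular and \<open>y\<close> can be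
  taken orthogonal to the whole first span.\<close>
lemma compatible_unit_vectors:
  assumes a: "orthonormal_fun n m a" and b: "orthonormal_fun n m b" and m: "0 < m"
  shows "\<exists>x y. cinner_fun n x x = 1 \<and> cinner_fun n y y = 1 \<and> in_span n m a x \<and> in_span n m b y \<and>
     (\<forall>z. in_span n m a z \<longrightarrow> cinner_fun n z x = 0 \<longrightarrow> cinner_fun n z y = 0) \<and>
     (\<forall>z. in_span n m b z \<longrightarrow> cinner_fun n z y = 0 \<longrightarrow> cinner_fun n z x = 0)"
proof -
  define G where "G i j = cinner_fun n (a i) (b j)" for i j
  obtain \<mu> \<alpha> where \<alpha>: "cinner_fun m \<alpha> \<alpha> = 1"
    and eig: "\<And>i. i < m \<Longrightarrow> (\<Sum>j<m. (\<Sum>l<m. G i l * cnj (G j l)) * \<alpha> j) = \<mu> * \<alpha> i"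
    using exists_unit_eigvec_coeffs[OF m, of "\<lambda>i j. \<Sum>l<m. G i l * cnj (G j l)"] by blast
  define x where "x = (\<lambda>k. \<Sum>i<m. \<alpha> i * a i k)"
  define \<beta> where "\<beta> j = (\<Sum>i<m. cnj (G i j) * \<alpha> i)" for j
  have x: "cinner_fun n x x = 1" "in_span n m a x"
    unfolding x_def cinner_fun_orthonormal_sums[OF a] by (fact \<alpha>, rule in_span_sum[OF a])
  have G\<beta>: "(\<Sum>l<m. G i l * \<beta> l) = \<mu> * \<alpha> i" if "i < m" for i
  proof -
    have "(\<Sum>l<m. G i l * \<beta> l) = (\<Sum>j<m. \<Sum>l<m. G i l * cnj (G j l) * \<alpha> j)"
      unfolding \<beta>_def by (subst sum.swap) (simp add: sum_distrib_left mult.assoc)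
    also have "\<dots> = \<mu> * \<alpha> i" using eig[OF that] by (simp add: sum_distrib_right)
    finally show ?thesis .
  qed
  have zx_b: "cinner_fun n z x = (\<Sum>j<m. cinner_fun n z (b j) * \<beta> j)" if "in_span n m b z" for z
  proof -
    have "cinner_fun n (b j) x = \<beta> j" for j
      unfolding x_def \<beta>_def cinner_fun_sum_right G_def by (simp add: cnj_cinner_fun mult.commute)
    then show ?thesis using parseval[OF that, of x] by simp
  qed
  show ?thesis
  proof (cases "\<exists>j<m. \<beta> j \<noteq> 0")
    case True
    then obtain r where r: "r > 0" "cinner_fun m (\<lambda>j. \<beta> j / of_real r) (\<lambda>j. \<beta> j / of_real r) = 1"
      using cinner_fun_normalize by blast
    define y where "y = (\<lambda>k. \<Sum>j<m. (\<beta> j / of_real r) * b j k)"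
    have y: "cinner_fun n y y = 1" "in_span n m b y"
      unfolding y_def cinner_fun_orthonormal_sums[OF b] by (fact r(2), rule in_span_sum[OF b])
    have zy: "cinner_fun n z y = (\<Sum>j<m. cinner_fun n z (b j) * \<beta> j) / of_real r" for z
      unfolding y_def cinner_fun_sum_right by (simp add: sum_divide_distrib mult.commute)
    have "cinner_fun n z y = 0" if z: "in_span n m a z" "cinner_fun n z x = 0" for z
    proof -
      have "(\<Sum>j<m. cinner_fun n z (b j) * \<beta> j) = (\<Sum>j<m. \<Sum>i<m. cinner_fun n z (a i) * G i j * \<beta> j)"
        by (rule sum.cong[OF refl]) (simp add: G_def parseval[OF z(1)] flip: sum_distrib_right)
      also have "\<dots> = (\<Sum>i<m. cinner_fun n z (a i) * (\<mu> * \<alpha> i))"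
        by (subst sum.swap) (simp add: G\<beta>[symmetric] sum_distrib_left mult.assoc)
      also have "\<dots> = \<mu> * cinner_fun n z x"
        unfolding x_def cinner_fun_sum_right by (simp add: sum_distrib_left mult_ac)
      finally show ?thesis unfolding zy z(2) by simp
    qed
    moreover have "cinner_fun n z x = 0" if "in_span n m b z" "cinner_fun n z y = 0" for z
      using that r(1) unfolding zy zx_b[OF that(1)] by simp
    ultimately show ?thesis using x y by blast
  next
    case False
    obtain i0 where i0: "i0 < m" "\<alpha> i0 \<noteq> 0" using cinner_fun_self_eq_1_nonzero[OF \<alpha>] .
    have "(\<Sum>i<m. cnj (\<alpha> i) * G i j) = cnj (\<beta> j)" for j
      unfolding \<beta>_def by (simp add: mult.commute)
    then have "(\<Sum>i<m. cnj (\<alpha> i) * G i j) = 0" if "j < m" for j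
      using False that by simp
    then obtain g where g: "cinner_fun m g g = 1" "\<forall>i<m. (\<Sum>j<m. G i j * g j) = 0"
      using exists_unit_null_coeffs[of i0 m "\<lambda>i. cnj (\<alpha> i)" G] i0 by auto
    define y where "y = (\<lambda>k. \<Sum>j<m. g j * b j k)"
    have y: "cinner_fun n y y = 1" "in_span n m b y"
      unfolding y_def cinner_fun_orthonormal_sums[OF b] by (fact g(1), rule in_span_sum[OF b])
    have "cinner_fun n (a i) y = 0" if "i < m" for i
      using g(2) that unfolding y_def cinner_fun_sum_right G_def by (simp add: mult.commute)
    then have "cinner_fun n z y = 0" if "in_span n m a z" for z
      unfolding parseval[OF that, of y, symmetric] by simp
    moreover have "cinner_fun n z x = 0" if "in_span n m b z" for z
      unfolding zx_b[OF that] using False by simp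
    ultimately show ?thesis using x y by blast
  qed
qed

section \<open>Interpolating eigenframes\<close>

lemma sum_lessThan_add_split:
  fixes k d :: nat shows "(\<Sum>i<k + d. f i) = (\<Sum>i<k. f i) + (\<Sum>j<d. f (k + j))"
  by (induction d) (simp_all add: add.assoc)

definition fam_append :: "nat \<Rightarrow> (nat \<Rightarrow> 'a) \<Rightarrow> (nat \<Rightarrow> 'a) \<Rightarrow> nat \<Rightarrow> 'a" where
  "fam_append k f g i = (if i < k then f i else g (i - k))"

lemma fam_append_shift: "fam_append k f (\<lambda>j. f (k + j)) = f"
  by (rule ext) (simp add: fam_append_def)

lemma orthonormal_fun_append:
  assumes f: "orthonormal_fun n k f" and g: "orthonormal_fun n m g"
    and orth: "\<forall>i<k. \<forall>j<m. cinner_fun n (f i) (g j) = 0"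
  shows "orthonormal_fun n (k + m) (fam_append k f g)"
  unfolding orthonormal_fun_def
proof (intro allI impI)
  fix i j assume i: "i < k + m" and j: "j < k + m"
  have gf: "cinner_fun n (g j) (f i) = 0" if "i < k" "j < m" for i j
    using orth that cnj_cinner_fun[of n "f i" "g j"] by simp
  show "cinner_fun n (fam_append k f g i) (fam_append k f g j) = (if i = j then 1 else 0)"
  proof (cases "i < k"; cases "j < k")
    assume "i < k" "j < k" then show ?thesis using f by (simp add: fam_append_def orthonormal_fun_def)
  next
    assume "i < k" "\<not> j < k" then show ?thesis using orth j by (simp add: fam_append_def)
  next
    assume "\<not> i < k" "j < k" then show ?thesis using gf i by (simp add: fam_append_def)
  next
    assume "\<not> i < k" "\<not> j < k"
    then show ?thesis using g i j by (simp add: fam_append_def orthonormal_fun_def) arith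
  qed
qed

lemma trace_form_append:
  "trace_form n A (k + m) (fam_append k f g) = trace_form n A k f + trace_form n A m g"
  unfolding trace_form_def sum_lessThan_add_split by (simp add: fam_append_def)

lemma orthonormal_fun_extend:
  assumes w: "orthonormal_fun n s w" and wz: "\<forall>i<s. cinner_fun n (w i) z = 0"
    and z: "cinner_fun n z z = 1"
  shows "orthonormal_fun n (Suc s) (w(s := z))"
  unfolding orthonormal_fun_def
proof (intro allI impI)
  fix i j assume "i < Suc s" "j < Suc s"
  moreover have "cinner_fun n z (w i) = 0" if "i < s" for i
    using wz that cnj_cinner_fun[of n "w i" z] by simp
  ultimately show "cinner_fun n ((w(s := z)) i) ((w(s := z)) j) = (if i = j then 1 else 0)"
    using w wz z unfolding orthonormal_fun_def less_Suc_eq by fastforce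
qed

lemma eigvec_lincomb2:
  assumes "eigvec n Y c x" "eigvec n Y c y" shows "eigvec n Y c (lincomb2 U x V y)"
  using assms unfolding eigvec_def lincomb2_def by (simp add: mat_mult_fun_add algebra_simps)

lemma last_block_start:
  fixes lam :: "nat \<Rightarrow> real"
  assumes sorted: "\<forall>i j. i \<le> j \<longrightarrow> j \<le> s \<longrightarrow> lam j \<le> lam i"
  obtains k where "k \<le> s" "\<And>i. i \<le> s \<Longrightarrow> lam i = lam s \<longleftrightarrow> k \<le> i"
proof
  define k where "k = (LEAST i. lam i = lam s)"
  show "k \<le> s" unfolding k_def by (rule Least_le) simp
  have lam_k: "lam k = lam s" unfolding k_def by (rule LeastI) simp
  show "lam i = lam s \<longleftrightarrow> k \<le> i" if "i \<le> s" for i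
  proof
    show "lam i = lam s \<Longrightarrow> k \<le> i" unfolding k_def by (rule Least_le)
    assume "k \<le> i"
    then have "lam i \<le> lam k" "lam s \<le> lam i" using sorted that by auto
    then show "lam i = lam s" using lam_k by simp
  qed
qed

lemma exchange_last_block:
  assumes herm: "\<forall>i<n. \<forall>j<n. Y i j = cnj (Y j i)"
    and u: "orthonormal_fun n (k + m) u" and m: "0 < m"
    and eig: "\<forall>i<k + m. eigvec n Y (of_real (lam i)) (u i)"
    and block: "\<forall>i<k + m. lam i = c \<longleftrightarrow> k \<le> i"
    and Q: "\<forall>i<k + m. \<forall>q\<in>Q. cinner_fun n q (u i) = 0"
    and x: "in_span n m (\<lambda>j. u (k + j)) x" "cinner_fun n x x = 1"
  shows "\<exists>u'. orthonormal_fun n (k + m) u' \<and> u' (k + m - 1) = x \<and> (\<forall>i<k. u' i = u i) \<and>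
    (\<forall>j<m. in_span n m (\<lambda>j. u (k + j)) (u' (k + j))) \<and>
    (\<forall>i<k + m. eigvec n Y (of_real (lam i)) (u' i)) \<and> (\<forall>i<k + m. \<forall>q\<in>Q. cinner_fun n q (u' i) = 0) \<and>
    trace_form n A (k + m) u' = trace_form n A (k + m) u"
proof -
  define a where "a = (\<lambda>j. u (k + j))"
  have a: "orthonormal_fun n m a" unfolding a_def by (rule orthonormal_fun_shift[OF u])
  obtain a' where a': "orthonormal_fun n m a'" "a' (m - 1) = x" "\<forall>j<m. in_span n m a (a' j)"
    "trace_form n A m a' = trace_form n A m a"
    using orthonormal_exchange[OF a _ x[folded a_def], of "m - 1" A] m by auto
  have eig_a: "\<forall>j<m. eigvec n Y (of_real c) (a j)"
  proof (intro allI impI)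
    fix j assume "j < m"
    then have "k + j < k + m" "lam (k + j) = c" using block by auto
    then show "eigvec n Y (of_real c) (a j)" using eig unfolding a_def by auto
  qed
  have eig_a': "eigvec n Y (of_real c) (a' j)" if "j < m" for j
    using eigvec_in_span[OF eig_a] a'(3) that by blast
  define u' where "u' = fam_append k u a'"
  have "orthonormal_fun n (k + m) u'"
    unfolding u'_def
  proof (rule orthonormal_fun_append[OF orthonormal_fun_mono[OF u] a'(1)])
    show "\<forall>i<k. \<forall>j<m. cinner_fun n (u i) (a' j) = 0"
    proof (intro allI impI)
      fix i j assume "i < k" "j < m"
      then have "eigvec n Y (of_real (lam i)) (u i)" "lam i \<noteq> c" using eig block by auto
      then show "cinner_fun n (u i) (a' j) = 0" using eigvec_orthogonal[OF herm _ eig_a'] \<open>j < m\<close> by blast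
    qed
  qed simp
  moreover have "trace_form n A (k + m) u' = trace_form n A (k + m) u"
  proof -
    have "trace_form n A (k + m) u' = trace_form n A k u + trace_form n A m a"
      unfolding u'_def trace_form_append a'(4) ..
    also have "\<dots> = trace_form n A (k + m) (fam_append k u a)"
      by (rule trace_form_append[symmetric])
    finally show ?thesis unfolding a_def fam_append_shift .
  qed
  moreover have "\<forall>i<k + m. eigvec n Y (of_real (lam i)) (u' i)"
    using eig block eig_a' unfolding u'_def fam_append_def by auto
  moreover have "\<forall>i<k + m. \<forall>q\<in>Q. cinner_fun n q (u' i) = 0"
    using Q orthogonal_in_span[of m n _ a] a'(3) unfolding u'_def fam_append_def a_def
    by (auto simp: less_diff_conv2)
  moreover have "u' (k + m - 1) = x" "\<forall>i<k. u' i = u i" "\<forall>j<m. in_span n m a (u' (k + j))"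
    using a'(2,3) m unfolding u'_def fam_append_def by auto
  ultimately show ?thesis unfolding a_def by blast
qed

lemma align_last_vectors:
  assumes herm: "\<forall>i<n. \<forall>j<n. Y i j = cnj (Y j i)"
    and u: "orthonormal_fun n (Suc s) u" and v: "orthonormal_fun n (Suc s) v"
    and sorted: "\<forall>i j. i \<le> j \<longrightarrow> j < Suc s \<longrightarrow> lam j \<le> lam i"
    and eig: "\<forall>i<Suc s. eigvec n Y (of_real (lam i)) (u i) \<and> eigvec n Y (of_real (lam i)) (v i)"
    and Q: "\<forall>i<Suc s. \<forall>q\<in>Q. cinner_fun n q (u i) = 0 \<and> cinner_fun n q (v i) = 0"
  obtains u' v' where "orthonormal_fun n (Suc s) u'" "orthonormal_fun n (Suc s) v'"
    "\<forall>i<Suc s. eigvec n Y (of_real (lam i)) (u' i) \<and> eigvec n Y (of_real (lam i)) (v' i)"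
    "\<forall>i<Suc s. \<forall>q\<in>Q. cinner_fun n q (u' i) = 0 \<and> cinner_fun n q (v' i) = 0"
    "\<forall>i<s. \<forall>q\<in>{u' s, v' s}. cinner_fun n q (u' i) = 0 \<and> cinner_fun n q (v' i) = 0"
    "trace_form n A (Suc s) u' = trace_form n A (Suc s) u"
    "trace_form n A (Suc s) v' = trace_form n A (Suc s) v"
proof -
  obtain k where k: "k \<le> s" and block: "\<And>i. i \<le> s \<Longrightarrow> lam i = lam s \<longleftrightarrow> k \<le> i"
    using last_block_start[of s lam] sorted by auto
  define m where "m = Suc s - k"
  have km: "k + m = Suc s" "k + m - 1 = s" "0 < m" using k unfolding m_def by auto
  have block': "\<forall>i<k + m. lam i = lam s \<longleftrightarrow> k \<le> i" using block km by auto
  have ua: "orthonormal_fun n m (\<lambda>j. u (k + j))" "orthonormal_fun n m (\<lambda>j. v (k + j))"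
    using orthonormal_fun_shift u v km(1) by metis+
  obtain x y where x: "cinner_fun n x x = 1" "in_span n m (\<lambda>j. u (k + j)) x"
    and y: "cinner_fun n y y = 1" "in_span n m (\<lambda>j. v (k + j)) y"
    and compat_x: "\<forall>z. in_span n m (\<lambda>j. u (k + j)) z \<longrightarrow> cinner_fun n z x = 0 \<longrightarrow> cinner_fun n z y = 0"
    and compat_y: "\<forall>z. in_span n m (\<lambda>j. v (k + j)) z \<longrightarrow> cinner_fun n z y = 0 \<longrightarrow> cinner_fun n z x = 0"
    using compatible_unit_vectors[OF ua km(3)] by blast
  obtain u' where u': "orthonormal_fun n (Suc s) u'" "u' s = x" "\<forall>i<k. u' i = u i"
      "\<forall>j<m. in_span n m (\<lambda>j. u (k + j)) (u' (k + j))" "\<forall>i<Suc s. eigvec n Y (of_real (lam i)) (u' i)"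
      "\<forall>i<Suc s. \<forall>q\<in>Q. cinner_fun n q (u' i) = 0" "trace_form n A (Suc s) u' = trace_form n A (Suc s) u"
    using exchange_last_block[OF herm _ km(3) _ block' _ x(2,1), of Q A] u eig Q unfolding km by auto
  obtain v' where v': "orthonormal_fun n (Suc s) v'" "v' s = y" "\<forall>i<k. v' i = v i"
      "\<forall>j<m. in_span n m (\<lambda>j. v (k + j)) (v' (k + j))" "\<forall>i<Suc s. eigvec n Y (of_real (lam i)) (v' i)"
      "\<forall>i<Suc s. \<forall>q\<in>Q. cinner_fun n q (v' i) = 0" "trace_form n A (Suc s) v' = trace_form n A (Suc s) v"
    using exchange_last_block[OF herm _ km(3) _ block' _ y(2,1), of Q A] v eig Q unfolding km by auto
  have eig_xy: "eigvec n Y (of_real (lam s)) x" "eigvec n Y (of_real (lam s)) y"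
    using u'(2,5) v'(2,5) by auto
  txt \<open>A vector of a rearranged frame before the block is orthogonal to \<open>q\<close> since their
    eigenvalues differ; one inside the block is orthogonal to the last vector \<open>p\<close>, hence to \<open>q\<close>
    by compatibility.\<close>
  have cross: "cinner_fun n q (f i) = 0"
    if "orthonormal_fun n (Suc s) f" "f s = p" "\<forall>i<k. f i = g i" "\<forall>j<m. in_span n m b (f (k + j))"
      "\<forall>i<Suc s. eigvec n Y (of_real (lam i)) (g i)" "eigvec n Y (of_real (lam s)) q"
      "\<forall>z. in_span n m b z \<longrightarrow> cinner_fun n z p = 0 \<longrightarrow> cinner_fun n z q = 0" "i < s"
    for f g p q b i
  proof (cases "i < k")
    case True
    then show ?thesis using that eigvec_orthogonal[OF herm that(6), of "lam i" "g i"] block[of i] by auto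
  next
    case False
    then have "cinner_fun n (f i) p = 0" "in_span n m b (f i)"
      using that km unfolding orthonormal_fun_def by (auto dest: spec[of _ "i - k"])
    then show ?thesis using that(7) cnj_cinner_fun[of n "f i" q] by auto
  qed
  have "\<forall>i<s. \<forall>q\<in>{x, y}. cinner_fun n q (u' i) = 0 \<and> cinner_fun n q (v' i) = 0"
  proof (intro allI impI ballI)
    fix i q assume i: "i < s" and "q \<in> {x, y}"
    moreover have "cinner_fun n x (u' i) = 0" "cinner_fun n y (v' i) = 0"
      using u'(1,2) v'(1,2) i unfolding orthonormal_fun_def by auto
    moreover have "cinner_fun n y (u' i) = 0"
      by (rule cross[OF u'(1,2,3,4) _ eig_xy(2) compat_x i]) (use eig in auto)
    moreover have "cinner_fun n x (v' i) = 0"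
      by (rule cross[OF v'(1,2,3,4) _ eig_xy(1) compat_y i]) (use eig in auto)
    ultimately show "cinner_fun n q (u' i) = 0 \<and> cinner_fun n q (v' i) = 0" by auto
  qed
  then show ?thesis using that[OF u'(1) v'(1) _ _ _ u'(7) v'(7)] u'(2,5,6) v'(2,5,6) by auto
qed

text \<open>\<open>Q\<close> is a set of vectors to which the interpolating frame must stay orthogonal; the
  induction step adds the vectors \<open>x\<close>, \<open>y\<close> that occupy the last position.\<close>
lemma eigenframe_interpolation:
  assumes herm: "\<forall>i<n. \<forall>j<n. Y i j = cnj (Y j i)" and t: "0 \<le> t" "t \<le> 1"
    and "orthonormal_fun n s u" "orthonormal_fun n s v"
    and "\<forall>i j. i \<le> j \<longrightarrow> j < s \<longrightarrow> lam j \<le> lam i"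
    and "\<forall>i<s. eigvec n Y (of_real (lam i)) (u i) \<and> eigvec n Y (of_real (lam i)) (v i)"
    and "\<forall>i<s. \<forall>q\<in>Q. cinner_fun n q (u i) = 0 \<and> cinner_fun n q (v i) = 0"
  shows "\<exists>w. orthonormal_fun n s w \<and> (\<forall>i<s. eigvec n Y (of_real (lam i)) (w i)) \<and>
    (\<forall>i<s. \<forall>q\<in>Q. cinner_fun n q (w i) = 0) \<and>
    trace_form n A s w = of_real (1 - t) * trace_form n A s u + of_real t * trace_form n A s v"
  using assms(4-)
proof (induction s arbitrary: u v Q)
  case 0
  show ?case by (rule exI[of _ u]) (auto simp: orthonormal_fun_def trace_form_def)
next
  case (Suc s)
  note sorted = Suc.prems(3)
  obtain u' v' where u'v': "orthonormal_fun n (Suc s) u'" "orthonormal_fun n (Suc s) v'"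
    and eig: "\<forall>i<Suc s. eigvec n Y (of_real (lam i)) (u' i) \<and> eigvec n Y (of_real (lam i)) (v' i)"
    and Q: "\<forall>i<Suc s. \<forall>q\<in>Q. cinner_fun n q (u' i) = 0 \<and> cinner_fun n q (v' i) = 0"
    and last: "\<forall>i<s. \<forall>q\<in>{u' s, v' s}. cinner_fun n q (u' i) = 0 \<and> cinner_fun n q (v' i) = 0"
    and tr: "trace_form n A (Suc s) u' = trace_form n A (Suc s) u"
      "trace_form n A (Suc s) v' = trace_form n A (Suc s) v"
    using align_last_vectors[OF herm Suc.prems] by metis
  define x where "x = u' s"
  define y where "y = v' s"
  have x: "cinner_fun n x x = 1" and y: "cinner_fun n y y = 1"
    using u'v' unfolding x_def y_def orthonormal_fun_def by auto
  have "\<exists>w. orthonormal_fun n s w \<and> (\<forall>i<s. eigvec n Y (of_real (lam i)) (w i)) \<and>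
    (\<forall>i<s. \<forall>q\<in>insert x (insert y Q). cinner_fun n q (w i) = 0) \<and>
    trace_form n A s w = of_real (1 - t) * trace_form n A s u' + of_real t * trace_form n A s v'"
  proof (rule Suc.IH)
    show "orthonormal_fun n s u'" by (rule orthonormal_fun_mono[OF u'v'(1)]) simp
    show "orthonormal_fun n s v'" by (rule orthonormal_fun_mono[OF u'v'(2)]) simp
    show "\<forall>i j. i \<le> j \<longrightarrow> j < s \<longrightarrow> lam j \<le> lam i" using sorted by auto
    show "\<forall>i<s. eigvec n Y (of_real (lam i)) (u' i) \<and> eigvec n Y (of_real (lam i)) (v' i)"
      using eig by auto
    show "\<forall>i<s. \<forall>q\<in>insert x (insert y Q). cinner_fun n q (u' i) = 0 \<and> cinner_fun n q (v' i) = 0"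
      using Q last unfolding x_def y_def by auto
  qed
  then obtain w where w: "orthonormal_fun n s w" "\<forall>i<s. eigvec n Y (of_real (lam i)) (w i)"
    "\<forall>i<s. \<forall>q\<in>insert x (insert y Q). cinner_fun n q (w i) = 0"
    "trace_form n A s w = of_real (1 - t) * trace_form n A s u' + of_real t * trace_form n A s v'"
    by blast
  obtain U V where z: "cinner_fun n (lincomb2 U x V y) (lincomb2 U x V y) = 1"
    "cinner_fun n (lincomb2 U x V y) (mat_mult_fun n A (lincomb2 U x V y))
      = of_real (1 - t) * cinner_fun n x (mat_mult_fun n A x) + of_real t * cinner_fun n y (mat_mult_fun n A y)"
    using toeplitz_hausdorff_two[OF x y t] by blast
  define z where "z = lincomb2 U x V y"
  have orth_z: "cinner_fun n q z = 0" if "cinner_fun n q x = 0" "cinner_fun n q y = 0" for q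
    using that unfolding z_def lincomb2_def by (simp add: cinner_fun_add_right)
  have "cinner_fun n (w i) z = 0" if "i < s" for i
    using w(3) that cnj_cinner_fun[of n x "w i"] cnj_cinner_fun[of n y "w i"] by (auto intro!: orth_z)
  then have "orthonormal_fun n (Suc s) (w(s := z))"
    using orthonormal_fun_extend[OF w(1) _ z(1)[folded z_def]] by blast
  moreover have "\<forall>i<Suc s. eigvec n Y (of_real (lam i)) ((w(s := z)) i)"
    using w(2) eig eigvec_lincomb2[of n Y "of_real (lam s)" x y U V] unfolding z_def x_def y_def
    by (auto simp: less_Suc_eq)
  moreover have "\<forall>i<Suc s. \<forall>q\<in>Q. cinner_fun n q ((w(s := z)) i) = 0"
    using w(3) Q orth_z unfolding x_def y_def by (auto simp: less_Suc_eq)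
  moreover have "trace_form n A (Suc s) (w(s := z))
      = of_real (1 - t) * trace_form n A (Suc s) u + of_real t * trace_form n A (Suc s) v"
  proof -
    have "trace_form n A s (w(s := z)) = trace_form n A s w"
      unfolding trace_form_def by (rule sum.cong) auto
    then have "trace_form n A (Suc s) (w(s := z)) = trace_form n A s w + cinner_fun n z (mat_mult_fun n A z)"
      by (simp add: trace_form_def)
    also have "\<dots> = of_real (1 - t) * (trace_form n A s u' + cinner_fun n x (mat_mult_fun n A x))
        + of_real t * (trace_form n A s v' + cinner_fun n y (mat_mult_fun n A y))"
      unfolding w(4) z(2)[folded z_def] by (simp add: algebra_simps)
    also have "\<dots> = of_real (1 - t) * trace_form n A (Suc s) u' + of_real t * trace_form n A (Suc s) v'"
      unfolding x_def y_def by (simp add: trace_form_def)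
    finally show ?thesis unfolding tr .
  qed
  ultimately show ?case by blast
qed

lemma cinner_eq_cinner_fun:
  "u \<in> carrier_vec n \<Longrightarrow> v \<in> carrier_vec n \<Longrightarrow> cinner u v = cinner_fun n (\<lambda>k. u $ k) (\<lambda>k. v $ k)"
  unfolding cinner_def cinner_fun_def scalar_prod_def by (simp add: atLeast0LessThan)

lemma index_mult_mat_vec_eq_mat_mult_fun:
  "X \<in> carrier_mat n n \<Longrightarrow> u \<in> carrier_vec n \<Longrightarrow> k < n \<Longrightarrow>
   (X *\<^sub>v u) $ k = mat_mult_fun n (\<lambda>i j. X $$ (i, j)) (\<lambda>k. u $ k) k"
  unfolding mat_mult_fun_def by (simp add: scalar_prod_def atLeast0LessThan)

lemma quadratic_form_eq_cinner_fun:
  assumes "X \<in> carrier_mat n n" "u \<in> carrier_vec n"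
  shows "cinner u (X *\<^sub>v u) = cinner_fun n (\<lambda>k. u $ k) (mat_mult_fun n (\<lambda>i j. X $$ (i, j)) (\<lambda>k. u $ k))"
proof -
  have "cinner u (X *\<^sub>v u) = cinner_fun n (\<lambda>k. u $ k) (\<lambda>k. (X *\<^sub>v u) $ k)"
    by (rule cinner_eq_cinner_fun) (use assms in auto)
  also have "\<dots> = cinner_fun n (\<lambda>k. u $ k) (mat_mult_fun n (\<lambda>i j. X $$ (i, j)) (\<lambda>k. u $ k))"
    by (rule cinner_fun_cong)
       (simp_all del: index_mult_mat_vec add: index_mult_mat_vec_eq_mat_mult_fun[OF assms])
  finally show ?thesis .
qed

lemma eigenvector_iff_eigvec:
  "Y \<in> carrier_mat n n \<Longrightarrow> u \<in> carrier_vec n \<Longrightarrow>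
   Y *\<^sub>v u = c \<cdot>\<^sub>v u \<longleftrightarrow> eigvec n (\<lambda>i j. Y $$ (i, j)) c (\<lambda>k. u $ k)"
  unfolding eigvec_def by (auto simp: vec_eq_iff index_mult_mat_vec_eq_mat_mult_fun[symmetric])

lemma eigvals_desc_antimono:
  assumes Y: "Y \<in> carrier_mat n n" and "i \<le> j" "j < n"
  shows "eigvals_desc Y ! j \<le> eigvals_desc Y ! i"
proof -
  define L where "L = sorted_list_of_multiset (image_mset Re (proots (char_poly Y)))"
  have "length L = size (image_mset Re (proots (char_poly Y)))"
    unfolding L_def by (metis mset_sorted_list_of_multiset size_mset)
  also have "\<dots> = n" using size_proots_complex[of "char_poly Y"] degree_monic_char_poly[OF Y] by simp
  finally have "length L = n" .
  moreover have "sorted L" unfolding L_def by simp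
  ultimately show ?thesis
    unfolding eigvals_desc_def L_def[symmetric] using assms(2,3) by (simp add: rev_nth sorted_nth_mono)
qed

lemma mem_W_set_iff:
  assumes X: "X \<in> carrier_mat n n" and Y: "Y \<in> carrier_mat n n"
  shows "z \<in> W_set n r X Y \<longleftrightarrow> (\<exists>f. orthonormal_fun n r f \<and>
      (\<forall>i<r. eigvec n (\<lambda>i j. Y $$ (i, j)) (of_real (eigvals_desc Y ! i)) (f i)) \<and>
      z = trace_form n (\<lambda>i j. X $$ (i, j)) r f)"
    (is "_ \<longleftrightarrow> (\<exists>f. ?frame f \<and> ?eig f \<and> z = ?tr f)")
proof
  assume "z \<in> W_set n r X Y"
  then obtain u where u: "\<forall>i<r. u i \<in> carrier_vec n"
      "\<forall>i<r. \<forall>j<r. cinner (u i) (u j) = (if i = j then 1 else 0)"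
      "\<forall>i<r. Y *\<^sub>v u i = of_real (eigvals_desc Y ! i) \<cdot>\<^sub>v u i"
    and z: "z = (\<Sum>i<r. cinner (u i) (X *\<^sub>v u i))"
    unfolding W_set_def by blast
  define f where "f i = (\<lambda>k. u i $ k)" for i
  have "cinner_fun n (f i) (f j) = cinner (u i) (u j)" if "i < r" "j < r" for i j
    unfolding f_def using u(1) that cinner_eq_cinner_fun[of "u i" n "u j"] by simp
  then have "?frame f" using u(2) unfolding orthonormal_fun_def by simp
  moreover have "?eig f" using u(1,3) eigenvector_iff_eigvec[OF Y] unfolding f_def by auto
  moreover have "z = ?tr f"
    unfolding z trace_form_def f_def using u(1) by (simp add: quadratic_form_eq_cinner_fun[OF X])
  ultimately show "\<exists>f. ?frame f \<and> ?eig f \<and> z = ?tr f" by blast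
next
  assume "\<exists>f. ?frame f \<and> ?eig f \<and> z = ?tr f"
  then obtain f where f: "?frame f" "?eig f" "z = ?tr f" by blast
  define u where "u i = vec n (f i)" for i
  have u: "u i \<in> carrier_vec n" for i unfolding u_def by simp
  have cinner_u: "cinner_fun n (\<lambda>k. u i $ k) g = cinner_fun n (f i) g"
    "cinner_fun n g (\<lambda>k. u i $ k) = cinner_fun n g (f i)" for i g
    by (rule cinner_fun_cong; simp add: u_def)+
  have mat_mult_u: "mat_mult_fun n M (\<lambda>k. u i $ k) = mat_mult_fun n M (f i)" for M i
    by (rule ext, rule mat_mult_fun_cong) (simp add: u_def)
  have "\<forall>i<r. \<forall>j<r. cinner (u i) (u j) = (if i = j then 1 else 0)"
    using f(1) unfolding orthonormal_fun_def cinner_eq_cinner_fun[OF u u] cinner_u by simp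
  moreover have "Y *\<^sub>v u i = of_real (eigvals_desc Y ! i) \<cdot>\<^sub>v u i" if "i < r" for i
    using f(2) that unfolding eigenvector_iff_eigvec[OF Y u] eigvec_def mat_mult_u by (simp add: u_def)
  moreover have "z = (\<Sum>i<r. cinner (u i) (X *\<^sub>v u i))"
    unfolding f(3) trace_form_def quadratic_form_eq_cinner_fun[OF X u] cinner_u mat_mult_u ..
  ultimately show "z \<in> W_set n r X Y" unfolding W_set_def using u by blast
qed

theorem lemma3p1:
  fixes n r :: nat and X Y :: "complex mat"
  assumes "X \<in> carrier_mat n n" and "Y \<in> carrier_mat n n"
    and "psd_mat n Y"
    and "1 \<le> r" and "r \<le> n"
  shows "convex (W_set n r X Y)"
  unfolding convex_alt
proof (intro ballI allI impI)
  fix z1 z2 and t :: real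
  assume "z1 \<in> W_set n r X Y" "z2 \<in> W_set n r X Y" and t: "0 \<le> t \<and> t \<le> 1"
  then obtain u v where u: "orthonormal_fun n r u" "z1 = trace_form n (\<lambda>i j. X $$ (i, j)) r u"
    and v: "orthonormal_fun n r v" "z2 = trace_form n (\<lambda>i j. X $$ (i, j)) r v"
    and eig: "\<forall>i<r. eigvec n (\<lambda>i j. Y $$ (i, j)) (of_real (eigvals_desc Y ! i)) (u i) \<and>
      eigvec n (\<lambda>i j. Y $$ (i, j)) (of_real (eigvals_desc Y ! i)) (v i)"
    unfolding mem_W_set_iff[OF assms(1,2)] by blast
  have herm: "\<forall>i<n. \<forall>j<n. Y $$ (i, j) = cnj (Y $$ (j, i))"
    using assms(3) unfolding psd_mat_def hermitian_mat_def by blast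
  have sorted: "\<forall>i j. i \<le> j \<longrightarrow> j < r \<longrightarrow> eigvals_desc Y ! j \<le> eigvals_desc Y ! i"
    using eigvals_desc_antimono[OF assms(2)] assms(5) by auto
  have "\<exists>w. orthonormal_fun n r w \<and>
      (\<forall>i<r. eigvec n (\<lambda>i j. Y $$ (i, j)) (of_real (eigvals_desc Y ! i)) (w i)) \<and>
      (\<forall>i<r. \<forall>q\<in>{}. cinner_fun n q (w i) = 0) \<and>
      trace_form n (\<lambda>i j. X $$ (i, j)) r w
        = of_real (1 - t) * trace_form n (\<lambda>i j. X $$ (i, j)) r u + of_real t * trace_form n (\<lambda>i j. X $$ (i, j)) r v"
    by (rule eigenframe_interpolation[OF herm _ _ u(1) v(1) sorted eig]) (use t in simp_all)
  then obtain w where w: "orthonormal_fun n r w"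
    "\<forall>i<r. eigvec n (\<lambda>i j. Y $$ (i, j)) (of_real (eigvals_desc Y ! i)) (w i)"
    "trace_form n (\<lambda>i j. X $$ (i, j)) r w = of_real (1 - t) * z1 + of_real t * z2"
    unfolding u(2) v(2) by blast
  then show "(1 - t) *\<^sub>R z1 + t *\<^sub>R z2 \<in> W_set n r X Y"
    unfolding mem_W_set_iff[OF assms(1,2)] scaleR_conv_of_real by (intro exI[of _ w]) simp
qed

end
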